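(* Let $G,H$ be finite groups, $U\leq G\times H$ a subdirect product, and $A$ an abelian group satisfying the Hypothesis for a set of primes $\pi$. Then $U$ is $A$-extensible if and only if for every $p\in\pi$, $k_1(U')$ contains a Sylow $p$-subgroup of $G'\cap k_1(U)$; equivalently, if and only if for every $p\in\pi$, $k_2(U')$ contains a Sylow $p$-subgroup of $H'\cap k_2(U)$.
   Context: For $U\leq G\times H$: $p_1(U)=\{g:\exists h,(g,h)\in U\}$, $p_2(U)=\{h:\exists g,(g,h)\in U\}$, $k_1(U)=\{g:(g,1)\in U\}$, $k_2(U)=\{h:(1,h)\in U\}$; $U$ is a subdirect product if $p_1(U)=G$, $p_2(U)=H$. $X'$ is the commutator subgroup of $X$. An abelian group $A$ satisfies the Hypothesis (with set of primes $\pi$) if there is a unique set of primes $\pi$ such that for every $n\in\mathbb{N}$ the $n$-torsion part of $A$ is cyclic of order $n_\pi$ (the $\pi$-part of $n$). $U$ is $A$-extensible if every homomorphism $U\to A$ extends to a homomorphism $G\times H\to A$. *)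

theory Defs
  imports "HOL-Algebra.Algebra" "HOL-Computational_Algebra.Primes"
begin

definition k1 :: "('a, 'c) monoid_scheme \<Rightarrow> ('b, 'd) monoid_scheme \<Rightarrow> ('a \<times> 'b) set \<Rightarrow> 'a set" where
  "k1 G H U = {g \<in> carrier G. (g, \<one>\<^bsub>H\<^esub>) \<in> U}"

definition k2 :: "('a, 'c) monoid_scheme \<Rightarrow> ('b, 'd) monoid_scheme \<Rightarrow> ('a \<times> 'b) set \<Rightarrow> 'b set" where
  "k2 G H U = {h \<in> carrier H. (\<one>\<^bsub>G\<^esub>, h) \<in> U}"

definition subdirect :: "('a, 'c) monoid_scheme \<Rightarrow> ('b, 'd) monoid_scheme \<Rightarrow> ('a \<times> 'b) set \<Rightarrow> bool" where
  "subdirect G H U \<longleftrightarrow> subgroup U (G \<times>\<times> H) \<and> fst ` U = carrier G \<and> snd ` U = carrier H"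

definition pi_part :: "nat set \<Rightarrow> nat \<Rightarrow> nat" where
  "pi_part \<pi> n = (\<Prod>p \<in> prime_factors n \<inter> \<pi>. p ^ multiplicity p n)"

definition torsion_part :: "('a, 'b) monoid_scheme \<Rightarrow> nat \<Rightarrow> 'a set" where
  "torsion_part A n = {a \<in> carrier A. a [^]\<^bsub>A\<^esub> n = \<one>\<^bsub>A\<^esub>}"

definition satisfies_hypothesis :: "('a, 'b) monoid_scheme \<Rightarrow> nat set \<Rightarrow> bool" where
  "satisfies_hypothesis A \<pi> \<longleftrightarrow> (\<forall>p \<in> \<pi>. Factorial_Ring.prime p) \<and>
     (\<forall>n::nat. n > 0 \<longrightarrow>
        cyclic_group (subgroup_generated A (torsion_part A n)) \<and>
        card (torsion_part A n) = pi_part \<pi> n)"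

definition extensible :: "('a, 'c) monoid_scheme \<Rightarrow> ('b, 'd) monoid_scheme \<Rightarrow> ('e, 'f) monoid_scheme
     \<Rightarrow> ('a \<times> 'b) set \<Rightarrow> bool" where
  "extensible G H A U \<longleftrightarrow>
     (\<forall>\<phi> \<in> hom (subgroup_generated (G \<times>\<times> H) U) A.
        \<exists>\<psi> \<in> hom (G \<times>\<times> H) A. \<forall>u \<in> U. \<psi> u = \<phi> u)"

definition sylow_subgroup_of :: "('a, 'b) monoid_scheme \<Rightarrow> nat \<Rightarrow> 'a set \<Rightarrow> 'a set \<Rightarrow> bool" where
  "sylow_subgroup_of G p P K \<longleftrightarrow>
     subgroup P G \<and> P \<subseteq> K \<and> card P = p ^ multiplicity p (card K)"

end

theory Submission
  imports Defs
begin

text \<open>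
  The Hypothesis makes \<open>A\<close> behave like an injective module for finite abelian groups: the
  power map \<open>x \<mapsto> x\<^sup>k\<close> sends the \<open>mk\<close>-torsion of \<open>A\<close> onto its \<open>m\<close>-torsion, since the orders
  \<open>(mk)\<^sub>\<pi> = m\<^sub>\<pi> k\<^sub>\<pi>\<close> multiply. Hence a homomorphism that is defined on a subgroup
  \<open>V \<supseteq> W'\<close> of a finite group \<open>W\<close> and trivial on \<open>W'\<close> extends to \<open>W\<close>, one cyclic subgroup at a time.

  So homomorphisms \<open>U \<rightarrow> A\<close> extend to \<open>W\<close> iff \<open>U \<inter> W'\<close> and \<open>U'\<close> have orders with equal
  \<open>p\<close>-parts for all \<open>p \<in> \<pi>\<close>. If they do, a homomorphism \<open>\<phi>\<close> on \<open>U\<close>, which kills \<open>U'\<close>, maps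
  \<open>U \<inter> W'\<close> onto a group of order prime to \<open>\<pi>\<close>, hence trivially, so \<open>\<phi>\<close> glues with the trivial
  map on \<open>W'\<close> and extends. If they do not, some \<open>x \<in> U \<inter> W'\<close> outside \<open>U'\<close> has \<open>x\<^sup>p \<in> U'\<close>,
  and a homomorphism on \<open>U\<close> sending \<open>x\<close> to an element of order \<open>p\<close> cannot extend, because
  every homomorphism \<open>W \<rightarrow> A\<close> kills \<open>W'\<close>.

  For a subdirect product \<open>U\<close> of \<open>W = G \<times> H\<close>, projecting onto \<open>H\<close> gives
  \<open>|U \<inter> W'| = |H'| |G' \<inter> k\<^sub>1(U)|\<close> and \<open>|U'| = |H'| |k\<^sub>1(U')|\<close>, and by Sylow's theorem the last
  two factors have equal \<open>p\<close>-parts iff \<open>k\<^sub>1(U')\<close> contains a Sylow \<open>p\<close>-subgroup of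
  \<open>G' \<inter> k\<^sub>1(U)\<close>. Projecting onto \<open>G\<close> gives the statement for \<open>k\<^sub>2\<close>.
\<close>

section \<open>Homomorphisms defined on a subgroup\<close>

definition hom_on :: "('a, 'b) monoid_scheme \<Rightarrow> ('e, 'f) monoid_scheme \<Rightarrow> 'a set \<Rightarrow> ('a \<Rightarrow> 'e) \<Rightarrow> bool"
  where "hom_on G A V f \<longleftrightarrow> f \<in> V \<rightarrow> carrier A \<and> (\<forall>x\<in>V. \<forall>y\<in>V. f (x \<otimes>\<^bsub>G\<^esub> y) = f x \<otimes>\<^bsub>A\<^esub> f y)"

lemma hom_on_iff_hom_subgroup_generated:
  "subgroup V G \<Longrightarrow> hom_on G A V f \<longleftrightarrow> f \<in> hom (subgroup_generated G V) A"
  by (simp add: hom_on_def hom_def subgroup.carrier_subgroup_generated_subgroup)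

lemma hom_on_carrier_iff: "hom_on G A (carrier G) f \<longleftrightarrow> f \<in> hom G A"
  by (simp add: hom_on_def hom_def)

lemma hom_on_closed: "hom_on G A V f \<Longrightarrow> x \<in> V \<Longrightarrow> f x \<in> carrier A"
  by (auto simp: hom_on_def)

lemma hom_on_mult: "hom_on G A V f \<Longrightarrow> x \<in> V \<Longrightarrow> y \<in> V \<Longrightarrow> f (x \<otimes>\<^bsub>G\<^esub> y) = f x \<otimes>\<^bsub>A\<^esub> f y"
  by (simp add: hom_on_def)

lemma hom_on_subset: "hom_on G A U f \<Longrightarrow> V \<subseteq> U \<Longrightarrow> hom_on G A V f"
  by (auto simp: hom_on_def)

lemma (in group) hom_on_group_hom:
  assumes "group A" and "subgroup V G" and "hom_on G A V f"
  shows "group_hom (subgroup_generated G V) A f"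
  using assms by (simp add: group_hom_def group_hom_axioms_def hom_on_iff_hom_subgroup_generated)

lemma (in group) hom_on_one:
  assumes "group A" and "subgroup V G" and "hom_on G A V f"
  shows "f \<one> = \<one>\<^bsub>A\<^esub>"
  using group_hom.hom_one[OF hom_on_group_hom[OF assms]] by simp

lemma (in group) hom_on_inv:
  assumes "group A" and V: "subgroup V G" and "hom_on G A V f" and x: "x \<in> V"
  shows "f (inv x) = inv\<^bsub>A\<^esub> f x"
  using group_hom.hom_inv[OF hom_on_group_hom[OF assms(1-3)]] x
    subgroup.carrier_subgroup_generated_subgroup[OF V]
  by (metis inv_subgroup_generated)

lemma (in group) hom_on_int_pow:
  assumes "group A" and V: "subgroup V G" and "hom_on G A V f" and x: "x \<in> V"
  shows "f (x [^] (i::int)) = f x [^]\<^bsub>A\<^esub> i"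
  using group_hom.hom_int_pow[OF hom_on_group_hom[OF assms(1-3)]] x
    subgroup.carrier_subgroup_generated_subgroup[OF V]
  by (metis int_pow_subgroup_generated)

lemma (in group) subgroup_hom_on_image:
  assumes "group A" and V: "subgroup V G" and "hom_on G A V f"
  shows "subgroup (f ` V) A"
proof -
  have "subgroup (carrier (subgroup_generated G V)) (subgroup_generated G V)"
    by (simp add: group.subgroup_self)
  then have "subgroup (f ` carrier (subgroup_generated G V)) A"
    by (rule group_hom.subgroup_img_is_subgroup[OF hom_on_group_hom[OF assms]])
  then show ?thesis
    using subgroup.carrier_subgroup_generated_subgroup[OF V] by simp
qed

lemma (in group) subgroup_hom_on_kernel:
  assumes "group A" and "subgroup V G" and "hom_on G A V f"
  shows "subgroup {x \<in> V. f x = \<one>\<^bsub>A\<^esub>} G"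
proof -
  have "subgroup (kernel (subgroup_generated G V) A f) (subgroup_generated G V)"
    by (rule group_hom.subgroup_kernel[OF hom_on_group_hom[OF assms]])
  moreover have "kernel (subgroup_generated G V) A f = {x \<in> V. f x = \<one>\<^bsub>A\<^esub>}"
    using subgroup.carrier_subgroup_generated_subgroup[OF assms(2)] by (auto simp: kernel_def)
  ultimately show ?thesis
    using subgroup_subgroup_generated_iff by auto
qed

section \<open>Orders of subgroups and powers of elements\<close>

lemma (in group) card_subgroup_eq_card_image_mult_card_kernel:
  assumes Y: "group Y" and S: "subgroup S G" and h: "hom_on G Y S h" and fin: "finite S"
  shows "card S = card (h ` S) * card {x \<in> S. h x = \<one>\<^bsub>Y\<^esub>}"
proof -
  let ?K = "subgroup_generated G S" and ?Q = "subgroup_generated Y (h ` S)"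
  have carrier_K: "carrier ?K = S"
    by (rule subgroup.carrier_subgroup_generated_subgroup[OF S])
  have img: "subgroup (h ` S) Y"
    by (rule subgroup_hom_on_image[OF Y S h])
  have "h \<in> hom ?K Y"
    using h hom_on_iff_hom_subgroup_generated[OF S] by blast
  then have hom: "group_hom ?K ?Q h"
    using Y img
    by (simp add: group_hom_def group_hom_axioms_def hom_into_subgroup_eq carrier_K
        group.group_subgroup_generated)
  moreover have "h ` carrier ?K = carrier ?Q"
    using subgroup.carrier_subgroup_generated_subgroup[OF img] carrier_K by simp
  ultimately have "?K Mod kernel ?K ?Q h \<cong> ?Q"
    by (rule group_hom.FactGroup_iso)
  then have "card (rcosets\<^bsub>?K\<^esub> kernel ?K ?Q h) = card (h ` S)"
    using iso_same_card subgroup.carrier_subgroup_generated_subgroup[OF img]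
    by (fastforce simp: FactGroup_def)
  moreover have "kernel ?K ?Q h = {x \<in> S. h x = \<one>\<^bsub>Y\<^esub>}"
    using carrier_K by (auto simp: kernel_def)
  moreover have "card (rcosets\<^bsub>?K\<^esub> kernel ?K ?Q h) * card (kernel ?K ?Q h) = card S"
    using group.lagrange[OF _ group_hom.subgroup_kernel[OF hom]] carrier_K hom
    by (metis group_hom.axioms(1) order_def)
  ultimately show ?thesis by simp
qed

lemma (in group) card_subgroup_dvd:
  assumes L: "subgroup L G" and M: "subgroup M G" and LM: "L \<subseteq> M"
  shows "card L dvd card M"
proof -
  have "subgroup L (subgroup_generated G M)"
    by (rule subgroup_of_subgroup_generated[OF LM L])
  then have "card (rcosets\<^bsub>subgroup_generated G M\<^esub> L) * card L = card M"
    using group.lagrange[OF group_subgroup_generated] subgroup.carrier_subgroup_generated_subgroup[OF M]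
    by (metis order_def)
  then show ?thesis by (metis dvd_triv_right)
qed

lemma (in group) card_subgroup_pos:
  assumes "finite (carrier G)" and "subgroup S G"
  shows "card S > 0"
  using assms subgroup.one_closed[of S G] finite_subset[OF subgroup.subset]
  by (metis card_gt_0_iff empty_iff)

lemma (in group) pow_card_subgroup_eq_one:
  assumes S: "subgroup S G" and x: "x \<in> S"
  shows "x [^] card S = \<one>"
proof -
  have "x [^]\<^bsub>subgroup_generated G S\<^esub> order (subgroup_generated G S) = \<one>\<^bsub>subgroup_generated G S\<^esub>"
    using group.pow_order_eq_1[OF group_subgroup_generated] x subgroup.carrier_subgroup_generated_subgroup[OF S]
    by blast
  then show ?thesis
    using subgroup.carrier_subgroup_generated_subgroup[OF S] by (simp add: pow_subgroup_generated order_def)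
qed

lemma prime_power_dvd_iff_le_multiplicity:
  fixes p m :: nat
  assumes "Factorial_Ring.prime p" and "m \<noteq> 0"
  shows "p ^ n dvd m \<longleftrightarrow> n \<le> multiplicity p m"
  by (rule power_dvd_iff_le_multiplicity) (use assms not_prime_unit in auto)

lemma multiplicity_mult_cancel_left:
  fixes p a b c :: nat
  assumes "Factorial_Ring.prime p" and "a > 0" and "b > 0" and "c > 0"
  shows "multiplicity p (c * a) = multiplicity p (c * b) \<longleftrightarrow> multiplicity p a = multiplicity p b"
  using assms by (simp add: prime_elem_multiplicity_mult_distrib prime_imp_prime_elem)

lemma multiplicity_eq_imp_not_dvd:
  fixes p d k n :: nat
  assumes p: "Factorial_Ring.prime p" and "d dvd k" and "k > 0" and n: "n > 0"
    and eq: "multiplicity p (n * k) = multiplicity p d"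
  shows "\<not> p dvd n"
proof
  assume "p dvd n"
  then have "multiplicity p n > 0"
    using n p by (simp add: prime_multiplicity_gt_zero_iff prime_imp_prime_elem)
  moreover have "multiplicity p d \<le> multiplicity p k"
    using assms by (intro dvd_imp_multiplicity_le) auto
  ultimately show False
    using eq n \<open>k > 0\<close> p by (simp add: prime_elem_multiplicity_mult_distrib prime_imp_prime_elem)
qed

lemma (in group) exists_sylow_subgroup:
  assumes fin: "finite (carrier G)" and M: "subgroup M G" and p: "Factorial_Ring.prime p"
  shows "\<exists>P. subgroup P G \<and> P \<subseteq> M \<and> card P = p ^ multiplicity p (card M)"
proof -
  have carrier_M: "carrier (subgroup_generated G M) = M"
    by (rule subgroup.carrier_subgroup_generated_subgroup[OF M])
  obtain m where "card M = p ^ multiplicity p (card M) * m"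
    using multiplicity_dvd by (metis dvdE)
  then obtain P where "subgroup P (subgroup_generated G M)" "card P = p ^ multiplicity p (card M)"
    using sylow_thm[OF p group_subgroup_generated] fin finite_subset[OF subgroup.subset[OF M]] carrier_M
    by (metis order_def)
  then show ?thesis
    using subgroup_subgroup_generated_iff carrier_M by auto
qed

lemma (in group) ex_sylow_subgroup_within_iff:
  assumes fin: "finite (carrier G)" and L: "subgroup L G" and M: "subgroup M G"
    and LM: "L \<subseteq> M" and p: "Factorial_Ring.prime p"
  shows "(\<exists>P. sylow_subgroup_of G p P M \<and> P \<subseteq> L) \<longleftrightarrow> multiplicity p (card M) = multiplicity p (card L)"
proof
  assume "\<exists>P. sylow_subgroup_of G p P M \<and> P \<subseteq> L"
  then obtain P where P: "subgroup P G" "card P = p ^ multiplicity p (card M)" "P \<subseteq> L"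
    unfolding sylow_subgroup_of_def by blast
  have "p ^ multiplicity p (card M) dvd card L"
    using card_subgroup_dvd[OF P(1) L P(3)] P(2) by simp
  then have "multiplicity p (card M) \<le> multiplicity p (card L)"
    using prime_power_dvd_iff_le_multiplicity[OF p] card_subgroup_pos[OF fin L] by simp
  moreover have "multiplicity p (card L) \<le> multiplicity p (card M)"
    by (rule dvd_imp_multiplicity_le) (use card_subgroup_dvd[OF L M LM] card_subgroup_pos[OF fin M] in auto)
  ultimately show "multiplicity p (card M) = multiplicity p (card L)" by simp
next
  assume "multiplicity p (card M) = multiplicity p (card L)"
  then show "\<exists>P. sylow_subgroup_of G p P M \<and> P \<subseteq> L"
    using exists_sylow_subgroup[OF fin L p] LM unfolding sylow_subgroup_of_def by auto
qed

lemma (in group) multiplicity_eq_iff_sylow_subgroup_within: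
  assumes fin: "finite (carrier G)" and L: "subgroup L G" and M: "subgroup M G"
    and LM: "L \<subseteq> M" and p: "Factorial_Ring.prime p"
    and "c > 0" and "a = c * card M" and "b = c * card L"
  shows "multiplicity p a = multiplicity p b \<longleftrightarrow> (\<exists>P. sylow_subgroup_of G p P M \<and> P \<subseteq> L)"
  using ex_sylow_subgroup_within_iff[OF fin L M LM p] multiplicity_mult_cancel_left[OF p]
    card_subgroup_pos[OF fin L] card_subgroup_pos[OF fin M] assms(6-8)
  by simp

lemma (in group) exists_pow_prime_mem:
  assumes fin: "finite (carrier G)" and D: "subgroup D G" and E: "subgroup E G"
    and p: "Factorial_Ring.prime p" and lt: "multiplicity p (card D) < multiplicity p (card E)"
  shows "\<exists>x\<in>E. x \<notin> D \<and> x [^] p \<in> D"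
proof -
  define a where "a = multiplicity p (card E)"
  obtain P where P: "subgroup P G" "P \<subseteq> E" "card P = p ^ a"
    using exists_sylow_subgroup[OF fin E p] unfolding a_def by blast
  have "\<not> P \<subseteq> D"
  proof
    assume "P \<subseteq> D"
    then have "p ^ a dvd card D"
      using card_subgroup_dvd[OF P(1) D] P(3) by simp
    then show False
      using prime_power_dvd_iff_le_multiplicity[OF p] card_subgroup_pos[OF fin D] lt a_def by simp
  qed
  then obtain y where y: "y \<in> P" "y \<notin> D" by blast
  have y_carrier: "y \<in> carrier G"
    using y(1) subgroup.subset[OF P(1)] by blast
  have "y [^] (p ^ a) \<in> D"
    using pow_card_subgroup_eq_one[OF P(1) y(1)] P(3) subgroup.one_closed[OF D] by simp
  then have ex: "\<exists>j. y [^] (p ^ j) \<in> D" by blast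
  define j where "j = (LEAST j. y [^] (p ^ j) \<in> D)"
  have j: "y [^] (p ^ j) \<in> D"
    unfolding j_def by (rule LeastI_ex[OF ex])
  have "j \<noteq> 0"
  proof
    assume "j = 0"
    with j y(2) y_carrier show False by simp
  qed
  define x where "x = y [^] (p ^ (j - 1))"
  have "x \<notin> D"
    unfolding x_def j_def by (rule not_less_Least) (use \<open>j \<noteq> 0\<close> j_def in simp)
  moreover have "x [^] p \<in> D"
    using j \<open>j \<noteq> 0\<close> y_carrier
    by (simp add: x_def nat_pow_pow power_Suc2[symmetric] del: power_Suc2)
  moreover have "x \<in> E"
    using subgroup_int_pow_closed[OF P(1) y(1), of "int (p ^ (j - 1))"] P(2)
    unfolding x_def int_pow_int by blast
  ultimately show ?thesis by blast
qed

lemma (in group) int_pow_gcd_mem: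
  assumes V: "subgroup V G" and x: "x \<in> carrier G"
    and "x [^] (i::int) \<in> V" and "x [^] (j::int) \<in> V"
  shows "x [^] gcd i j \<in> V"
proof -
  obtain u v where "u * i + v * j = gcd i j"
    using bezout_int by blast
  moreover have "x [^] (u * i + v * j) = (x [^] i) [^] u \<otimes> (x [^] j) [^] v"
    using x by (simp add: int_pow_mult int_pow_pow mult.commute)
  ultimately show ?thesis
    using assms subgroup_int_pow_closed subgroup.m_closed by metis
qed

lemma (in group) int_pow_mem_imp_dvd_least:
  assumes V: "subgroup V G" and x: "x \<in> carrier G" and k: "k > 0" "x [^] k \<in> V"
    and least: "\<And>n::nat. 0 < n \<Longrightarrow> n < k \<Longrightarrow> x [^] n \<notin> V"
    and i: "x [^] (i::int) \<in> V"
  shows "int k dvd i"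
proof -
  define g where "g = gcd (int k) i"
  have "x [^] g \<in> V"
    unfolding g_def using int_pow_gcd_mem[OF V x _ i] k int_pow_int by metis
  moreover have "0 < g" "g \<le> int k"
    using k by (simp_all add: g_def zdvd_imp_le)
  ultimately have "g = int k"
    using least[of "nat g"] int_pow_int[of G x "nat g"] by fastforce
  then show ?thesis
    unfolding g_def by (metis gcd_dvd2)
qed

lemma (in group) int_pow_mem_imp_prime_dvd:
  assumes V: "subgroup V G" and x: "x \<in> carrier G" "x \<notin> V" and p: "Factorial_Ring.prime p"
    and xp: "x [^] p \<in> V" and i: "x [^] (i::int) \<in> V"
  shows "int p dvd i"
proof (rule ccontr)
  assume "\<not> int p dvd i"
  then have "gcd (int p) i = 1"
    using p prime_imp_coprime[of "int p" i] by (simp add: coprime_iff_gcd_eq_1)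
  then have "x [^] (1::int) \<in> V"
    using int_pow_gcd_mem[OF V x(1) _ i] xp int_pow_int by metis
  then show False
    using x by simp
qed

section \<open>Abelian groups satisfying the Hypothesis\<close>

lemma pi_part_eq_prod:
  assumes "finite S" and "prime_factors n \<subseteq> S" and "n > 0"
    and "\<forall>p\<in>\<pi>. Factorial_Ring.prime p"
  shows "pi_part \<pi> n = (\<Prod>p\<in>S \<inter> \<pi>. p ^ multiplicity p n)"
  unfolding pi_part_def
proof (rule prod.mono_neutral_left)
  show "\<forall>p\<in>S \<inter> \<pi> - prime_factors n \<inter> \<pi>. p ^ multiplicity p n = 1"
  proof
    fix p assume "p \<in> S \<inter> \<pi> - prime_factors n \<inter> \<pi>"
    then have "\<not> p dvd n"
      using assms by (auto simp: in_prime_factors_iff)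
    then show "p ^ multiplicity p n = 1"
      by (simp add: not_dvd_imp_multiplicity_0)
  qed
qed (use assms in auto)

lemma pi_part_mult:
  assumes "m > 0" and "k > 0" and "\<forall>p\<in>\<pi>. Factorial_Ring.prime p"
  shows "pi_part \<pi> (m * k) = pi_part \<pi> m * pi_part \<pi> k"
proof -
  define S where "S = prime_factors m \<union> prime_factors k"
  have "prime_factors (m * k) = S"
    using assms by (simp add: S_def prime_factors_product)
  then have "pi_part \<pi> (m * k) = (\<Prod>p\<in>S \<inter> \<pi>. p ^ multiplicity p m * p ^ multiplicity p k)"
    using pi_part_eq_prod[of S "m * k" \<pi>] assms
    by (simp add: S_def prime_elem_multiplicity_mult_distrib prime_imp_prime_elem power_add)
  also have "\<dots> = pi_part \<pi> m * pi_part \<pi> k"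
    using pi_part_eq_prod[of S m \<pi>] pi_part_eq_prod[of S k \<pi>] assms
    by (simp add: prod.distrib S_def)
  finally show ?thesis .
qed

lemma pi_part_pos: "\<forall>p\<in>\<pi>. Factorial_Ring.prime p \<Longrightarrow> pi_part \<pi> n > 0"
  unfolding pi_part_def by (rule prod_pos) (auto intro: prime_gt_0_nat)

lemma pi_part_eq_1: "(\<And>p. p \<in> \<pi> \<Longrightarrow> \<not> p dvd n) \<Longrightarrow> pi_part \<pi> n = 1"
  unfolding pi_part_def by (rule prod.neutral) (auto simp: in_prime_factors_iff)

lemma pi_part_prime: "p \<in> \<pi> \<Longrightarrow> Factorial_Ring.prime p \<Longrightarrow> pi_part \<pi> p = p"
  unfolding pi_part_def
  by (simp add: prime_prime_factors Int_absorb2 multiplicity_self prime_imp_prime_elem)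

lemma satisfies_hypothesis_primes:
  "satisfies_hypothesis A \<pi> \<Longrightarrow> p \<in> \<pi> \<Longrightarrow> Factorial_Ring.prime p"
  by (simp add: satisfies_hypothesis_def)

lemma satisfies_hypothesis_card_torsion_part:
  "satisfies_hypothesis A \<pi> \<Longrightarrow> n > 0 \<Longrightarrow> card (torsion_part A n) = pi_part \<pi> n"
  by (simp add: satisfies_hypothesis_def)

lemma (in comm_group) subgroup_torsion_part: "subgroup (torsion_part G n) G"
  unfolding torsion_part_def
  by (rule subgroupI) (auto simp: pow_mult_distrib m_comm nat_pow_inv)

lemma (in comm_group) nat_pow_hom: "(\<lambda>x. x [^] (k::nat)) \<in> hom G G"
  by (auto simp: hom_def pow_mult_distrib m_comm)

lemma (in comm_group) exists_nat_pow_root: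
  fixes m k :: nat
  assumes hyp: "satisfies_hypothesis G \<pi>" and a: "a \<in> carrier G" "a [^] m = \<one>"
    and m: "m > 0" and k: "k > 0"
  shows "\<exists>t\<in>carrier G. t [^] k = a"
proof -
  let ?T = "torsion_part G"
  have primes: "\<forall>p\<in>\<pi>. Factorial_Ring.prime p"
    using hyp satisfies_hypothesis_primes by blast
  have card_T: "card (?T n) = pi_part \<pi> n" if "n > 0" for n
    using hyp that by (rule satisfies_hypothesis_card_torsion_part)
  have finite_T: "finite (?T n)" if "n > 0" for n
    using card_T[OF that] pi_part_pos[OF primes] by (metis card_ge_0_finite)
  have kernel: "{x \<in> ?T (m * k). x [^] k = \<one>} = ?T k"
    by (auto simp: torsion_part_def mult.commute[of m] nat_pow_pow[symmetric])
  have "card (?T (m * k)) = card ((\<lambda>x. x [^] k) ` ?T (m * k)) * card (?T k)"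
    using card_subgroup_eq_card_image_mult_card_kernel[OF is_group subgroup_torsion_part
        hom_on_subset[OF nat_pow_hom[folded hom_on_carrier_iff]] finite_T, of "m * k" k] m k kernel
    by (simp add: torsion_part_def)
  then have "card ((\<lambda>x. x [^] k) ` ?T (m * k)) = card (?T m)"
    using card_T m k pi_part_mult[OF m k primes] pi_part_pos[OF primes, of k] by simp
  moreover have "(\<lambda>x. x [^] k) ` ?T (m * k) \<subseteq> ?T m"
    by (auto simp: torsion_part_def nat_pow_pow mult.commute[of m])
  ultimately have "(\<lambda>x. x [^] k) ` ?T (m * k) = ?T m"
    using card_subset_eq finite_T[OF m] by blast
  moreover have "a \<in> ?T m"
    using a by (simp add: torsion_part_def)
  ultimately show ?thesis
    by (force simp: torsion_part_def)
qed

lemma (in comm_group) exists_elem_order_prime: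
  assumes hyp: "satisfies_hypothesis G \<pi>" and p: "p \<in> \<pi>"
  shows "\<exists>z\<in>carrier G. z [^] p = \<one> \<and> z \<noteq> \<one>"
proof -
  have prime: "Factorial_Ring.prime p"
    using hyp p by (rule satisfies_hypothesis_primes)
  then have "card (torsion_part G p) = p"
    using satisfies_hypothesis_card_torsion_part[OF hyp] pi_part_prime[OF p] prime_gt_0_nat by simp
  then have "\<not> torsion_part G p \<subseteq> {\<one>}"
    using card_mono[of "{\<one>}" "torsion_part G p"] prime_ge_2_nat[OF prime] by auto
  then show ?thesis
    by (auto simp: torsion_part_def)
qed

lemma (in comm_group) torsion_eq_one:
  assumes hyp: "satisfies_hypothesis G \<pi>" and n: "n > 0" and coprime: "\<And>p. p \<in> \<pi> \<Longrightarrow> \<not> p dvd n"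
    and a: "a \<in> carrier G" "a [^] n = \<one>"
  shows "a = \<one>"
proof -
  have "card (torsion_part G n) = 1"
    using satisfies_hypothesis_card_torsion_part[OF hyp n] pi_part_eq_1[OF coprime] by simp
  moreover have "a \<in> torsion_part G n" "\<one> \<in> torsion_part G n"
    using a by (auto simp: torsion_part_def)
  ultimately show ?thesis
    by (metis card_1_singletonE singletonD)
qed

section \<open>Extending homomorphisms from subgroups\<close>

lemma (in comm_group) commutator_eq_one:
  assumes "a \<in> carrier G" and "b \<in> carrier G"
  shows "a \<otimes> b \<otimes> inv a \<otimes> inv b = \<one>"
proof -
  have "a \<otimes> b \<otimes> inv a \<otimes> inv b = (a \<otimes> b) \<otimes> inv (b \<otimes> a)"
    using assms by (simp add: m_assoc inv_mult_group)
  also have "\<dots> = \<one>"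
    using assms by (simp add: m_comm[of b a])
  finally show ?thesis .
qed

lemma derived_set_subset_derived: "derived_set G S \<subseteq> derived G S"
  unfolding derived_def by (auto intro: generate.incl)

lemma (in group) derived_subgroup_generated:
  assumes U: "subgroup U G"
  shows "derived (subgroup_generated G U) U = derived G U"
proof -
  have "subgroup_generated G U = G\<lparr>carrier := U\<rparr>"
    using subgroup.carrier_subgroup_generated_subgroup[OF U]
    by (simp add: subgroup_generated_def carrier_subgroup_generated)
  then show ?thesis
    using derived_consistent[OF subset_refl U] by simp
qed

lemma (in group) subgroup_inter_derived:
  "subgroup U G \<Longrightarrow> subgroup (U \<inter> derived G (carrier G)) G"
  by (rule subgroups_Inter_pair[OF _ derived_is_subgroup]) simp_all

lemma (in group) derived_subset_inter_derived:
  "subgroup U G \<Longrightarrow> derived G U \<subseteq> U \<inter> derived G (carrier G)"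
  using derived_incl[OF subset_refl] mono_derived[OF subgroup.subset] by blast

lemma (in group) hom_on_derived_eq_one:
  assumes A: "comm_group A" and U: "subgroup U G" and f: "hom_on G A U f"
    and z: "z \<in> derived G U"
  shows "f z = \<one>\<^bsub>A\<^esub>"
proof -
  interpret A: comm_group A by (rule A)
  let ?K = "{x \<in> U. f x = \<one>\<^bsub>A\<^esub>}"
  have "x \<otimes> y \<otimes> inv x \<otimes> inv y \<in> ?K" if "x \<in> U" "y \<in> U" for x y
  proof -
    have "f (x \<otimes> y \<otimes> inv x \<otimes> inv y) = f x \<otimes>\<^bsub>A\<^esub> f y \<otimes>\<^bsub>A\<^esub> inv\<^bsub>A\<^esub> f x \<otimes>\<^bsub>A\<^esub> inv\<^bsub>A\<^esub> f y"
      using that U f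
      by (simp add: hom_on_mult hom_on_inv[OF A.is_group] subgroup.m_closed subgroup.m_inv_closed)
    then show ?thesis
      using that U A.commutator_eq_one hom_on_closed[OF f]
      by (simp add: subgroup.m_closed subgroup.m_inv_closed)
  qed
  then have "derived G U \<subseteq> ?K"
    unfolding derived_def
    by (intro generate_subgroup_incl[OF _ subgroup_hom_on_kernel[OF A.is_group U f]]) blast
  then show ?thesis
    using z by blast
qed

text \<open>A homomorphism from the subgroup \<open>V/G'\<close> of the abelianization \<open>G/G'\<close> to \<open>A\<close>, stated
  without quotient groups.\<close>
definition abelian_hom_on ::
    "('a, 'b) monoid_scheme \<Rightarrow> ('e, 'f) monoid_scheme \<Rightarrow> 'a set \<Rightarrow> ('a \<Rightarrow> 'e) \<Rightarrow> bool"
  where "abelian_hom_on G A V \<psi> \<longleftrightarrow> subgroup V G \<and> hom_on G A V \<psi> \<and>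
    derived_set G (carrier G) \<subseteq> V \<and> (\<forall>c\<in>derived_set G (carrier G). \<psi> c = \<one>\<^bsub>A\<^esub>)"

lemma (in group) abelian_hom_on_commutator:
  assumes "abelian_hom_on G A V \<psi>" and "x \<in> carrier G" and "y \<in> carrier G"
  shows "x \<otimes> y \<otimes> inv x \<otimes> inv y \<in> V" and "\<psi> (x \<otimes> y \<otimes> inv x \<otimes> inv y) = \<one>\<^bsub>A\<^esub>"
proof -
  have "x \<otimes> y \<otimes> inv x \<otimes> inv y \<in> derived_set G (carrier G)"
    using assms(2,3) by blast
  then show "x \<otimes> y \<otimes> inv x \<otimes> inv y \<in> V" and "\<psi> (x \<otimes> y \<otimes> inv x \<otimes> inv y) = \<one>\<^bsub>A\<^esub>"
    using assms(1) unfolding abelian_hom_on_def by auto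
qed

lemma (in group) abelian_hom_on_conj:
  assumes A: "group A" and \<psi>: "abelian_hom_on G A V \<psi>" and y: "y \<in> carrier G" and v: "v \<in> V"
  shows "y \<otimes> v \<otimes> inv y \<in> V" and "\<psi> (y \<otimes> v \<otimes> inv y) = \<psi> v"
proof -
  interpret A: group A by (rule A)
  have V: "subgroup V G" and hom: "hom_on G A V \<psi>"
    using \<psi> by (auto simp: abelian_hom_on_def)
  have v_carrier: "v \<in> carrier G"
    using v subgroup.subset[OF V] by blast
  define c where "c = y \<otimes> v \<otimes> inv y \<otimes> inv v"
  have c: "c \<in> V" "\<psi> c = \<one>\<^bsub>A\<^esub>"
    using abelian_hom_on_commutator[OF \<psi> y v_carrier] by (simp_all add: c_def)
  have conj: "y \<otimes> v \<otimes> inv y = c \<otimes> v"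
    using y v_carrier by (simp add: c_def m_assoc)
  show "y \<otimes> v \<otimes> inv y \<in> V"
    using conj c v V by (simp add: subgroup.m_closed)
  show "\<psi> (y \<otimes> v \<otimes> inv y) = \<psi> v"
    using conj c v hom_on_mult[OF hom] hom_on_closed[OF hom] by simp
qed

lemma (in group) abelian_hom_on_normal:
  assumes "group A" and "abelian_hom_on G A V \<psi>"
  shows "V \<lhd> G"
  unfolding normal_inv_iff
  using abelian_hom_on_conj(1)[OF assms] assms(2) by (simp add: abelian_hom_on_def)

lemma (in group) abelian_hom_on_one:
  assumes "group A" and "subgroup V G" and "derived_set G (carrier G) \<subseteq> V"
  shows "abelian_hom_on G A V (\<lambda>_. \<one>\<^bsub>A\<^esub>)"
  using assms by (simp add: abelian_hom_on_def hom_on_def group.is_monoid)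

lemma (in group) hom_on_set_mult_well_defined:
  assumes A: "group A" and V: "subgroup V G" and S: "subgroup S G"
    and \<psi>: "hom_on G A V \<psi>" and \<chi>: "hom_on G A S \<chi>" and agree: "\<forall>z\<in>V \<inter> S. \<psi> z = \<chi> z"
    and v: "v \<in> V" "v' \<in> V" and s: "s \<in> S" "s' \<in> S" and eq: "v \<otimes> s = v' \<otimes> s'"
  shows "\<psi> v \<otimes>\<^bsub>A\<^esub> \<chi> s = \<psi> v' \<otimes>\<^bsub>A\<^esub> \<chi> s'"
proof -
  interpret A: group A by (rule A)
  have carrier: "v \<in> carrier G" "v' \<in> carrier G" "s \<in> carrier G" "s' \<in> carrier G"
    using v s subgroup.subset[OF V] subgroup.subset[OF S] by auto
  have "inv v' \<otimes> v = inv v' \<otimes> (v \<otimes> s) \<otimes> inv s"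
    using carrier by (simp add: m_assoc)
  also have "\<dots> = s' \<otimes> inv s"
    using carrier by (simp add: eq m_assoc[symmetric])
  finally have "inv v' \<otimes> v = s' \<otimes> inv s" .
  moreover have "inv v' \<otimes> v \<in> V" and "s' \<otimes> inv s \<in> S"
    using v s V S by (simp_all add: subgroup.m_closed subgroup.m_inv_closed)
  ultimately have "\<psi> (inv v' \<otimes> v) = \<chi> (s' \<otimes> inv s)"
    using agree by auto
  then have "inv\<^bsub>A\<^esub> \<psi> v' \<otimes>\<^bsub>A\<^esub> \<psi> v = \<chi> s' \<otimes>\<^bsub>A\<^esub> inv\<^bsub>A\<^esub> \<chi> s"
    using v s V S \<psi> \<chi> by (simp add: hom_on_mult hom_on_inv[OF A] subgroup.m_inv_closed)
  then have "\<psi> v = \<psi> v' \<otimes>\<^bsub>A\<^esub> (\<chi> s' \<otimes>\<^bsub>A\<^esub> inv\<^bsub>A\<^esub> \<chi> s)"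
    using v s hom_on_closed[OF \<psi>] hom_on_closed[OF \<chi>] A.inv_solve_left' by auto
  then show ?thesis
    using v s hom_on_closed[OF \<psi>] hom_on_closed[OF \<chi>] by (simp add: A.m_assoc)
qed

lemma (in group) hom_on_set_mult:
  assumes A: "comm_group A" and V: "subgroup V G" and S: "subgroup S G"
    and \<psi>: "hom_on G A V \<psi>" and \<chi>: "hom_on G A S \<chi>" and agree: "\<forall>z\<in>V \<inter> S. \<psi> z = \<chi> z"
    and conj: "\<And>s v. s \<in> S \<Longrightarrow> v \<in> V \<Longrightarrow> s \<otimes> v \<otimes> inv s \<in> V \<and> \<psi> (s \<otimes> v \<otimes> inv s) = \<psi> v"
  shows "\<exists>\<theta>. hom_on G A (V <#> S) \<theta> \<and> (\<forall>v\<in>V. \<forall>s\<in>S. \<theta> (v \<otimes> s) = \<psi> v \<otimes>\<^bsub>A\<^esub> \<chi> s)"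
proof -
  interpret A: comm_group A by (rule A)
  have carrier: "v \<in> carrier G" if "v \<in> V \<union> S" for v
    using that subgroup.subset[OF V] subgroup.subset[OF S] by auto
  define \<theta> where "\<theta> z = (SOME r. \<exists>v\<in>V. \<exists>s\<in>S. z = v \<otimes> s \<and> r = \<psi> v \<otimes>\<^bsub>A\<^esub> \<chi> s)" for z
  have \<theta>: "\<theta> (v \<otimes> s) = \<psi> v \<otimes>\<^bsub>A\<^esub> \<chi> s" if "v \<in> V" "s \<in> S" for v s
  proof -
    let ?P = "\<lambda>r. \<exists>v'\<in>V. \<exists>s'\<in>S. v \<otimes> s = v' \<otimes> s' \<and> r = \<psi> v' \<otimes>\<^bsub>A\<^esub> \<chi> s'"
    have "?P (SOME r. ?P r)"
      by (rule someI[of ?P]) (use that in blast)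
    then obtain v' s' where "v' \<in> V" "s' \<in> S" "v \<otimes> s = v' \<otimes> s'"
      and "\<theta> (v \<otimes> s) = \<psi> v' \<otimes>\<^bsub>A\<^esub> \<chi> s'"
      unfolding \<theta>_def by blast
    then show ?thesis
      using hom_on_set_mult_well_defined[OF A.is_group V S \<psi> \<chi> agree that(1) _ that(2)] by simp
  qed
  have "hom_on G A (V <#> S) \<theta>"
    unfolding hom_on_def
  proof (intro conjI ballI Pi_I)
    fix a assume "a \<in> V <#> S"
    then obtain v s where "v \<in> V" "s \<in> S" "a = v \<otimes> s"
      unfolding set_mult_def by blast
    then show "\<theta> a \<in> carrier A"
      using \<theta> hom_on_closed[OF \<psi>] hom_on_closed[OF \<chi>] by simp
  next
    fix a b assume "a \<in> V <#> S" "b \<in> V <#> S"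
    then obtain v s v' s' where vs: "v \<in> V" "s \<in> S" "v' \<in> V" "s' \<in> S"
      and ab: "a = v \<otimes> s" "b = v' \<otimes> s'"
      unfolding set_mult_def by blast
    have "inv s \<otimes> (s \<otimes> s') = s'"
      using vs carrier by (simp add: m_assoc[symmetric])
    then have "a \<otimes> b = (v \<otimes> (s \<otimes> v' \<otimes> inv s)) \<otimes> (s \<otimes> s')"
      using vs carrier by (simp add: ab m_assoc)
    moreover have "v \<otimes> (s \<otimes> v' \<otimes> inv s) \<in> V" and "s \<otimes> s' \<in> S"
      using vs conj V S by (simp_all add: subgroup.m_closed)
    ultimately have "\<theta> (a \<otimes> b) = (\<psi> v \<otimes>\<^bsub>A\<^esub> \<psi> v') \<otimes>\<^bsub>A\<^esub> (\<chi> s \<otimes>\<^bsub>A\<^esub> \<chi> s')"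
      using vs conj \<theta> by (simp add: hom_on_mult[OF \<psi>] hom_on_mult[OF \<chi>])
    also have "\<dots> = \<theta> a \<otimes>\<^bsub>A\<^esub> \<theta> b"
      using vs \<theta> hom_on_closed[OF \<psi>] hom_on_closed[OF \<chi>] by (simp add: ab A.m_ac)
    finally show "\<theta> (a \<otimes> b) = \<theta> a \<otimes>\<^bsub>A\<^esub> \<theta> b" .
  qed
  then show ?thesis
    using \<theta> by blast
qed

lemma (in group) abelian_hom_on_set_mult:
  assumes A: "comm_group A" and \<psi>: "abelian_hom_on G A V \<psi>"
    and S: "subgroup S G" and \<chi>: "hom_on G A S \<chi>" and agree: "\<forall>z\<in>V \<inter> S. \<psi> z = \<chi> z"
  shows "\<exists>V' \<theta>. abelian_hom_on G A V' \<theta> \<and> V \<subseteq> V' \<and> S \<subseteq> V' \<and>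
    (\<forall>v\<in>V. \<theta> v = \<psi> v) \<and> (\<forall>s\<in>S. \<theta> s = \<chi> s)"
proof -
  interpret A: comm_group A by (rule A)
  have V: "subgroup V G" and hom: "hom_on G A V \<psi>"
    using \<psi> by (auto simp: abelian_hom_on_def)
  have conj: "s \<otimes> v \<otimes> inv s \<in> V \<and> \<psi> (s \<otimes> v \<otimes> inv s) = \<psi> v" if "s \<in> S" "v \<in> V" for s v
    using abelian_hom_on_conj[OF A.is_group \<psi> _ that(2)] that(1) subgroup.subset[OF S] by auto
  obtain \<theta> where \<theta>: "hom_on G A (V <#> S) \<theta>"
    and \<theta>_eq: "\<forall>v\<in>V. \<forall>s\<in>S. \<theta> (v \<otimes> s) = \<psi> v \<otimes>\<^bsub>A\<^esub> \<chi> s"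
    using hom_on_set_mult[OF A V S hom \<chi> agree conj] by blast
  have \<theta>_V: "\<theta> v = \<psi> v" if "v \<in> V" for v
  proof -
    have "\<theta> v = \<theta> (v \<otimes> \<one>)"
      using that subgroup.mem_carrier[OF V] by simp
    then show ?thesis
      using \<theta>_eq that subgroup.one_closed[OF S] hom_on_closed[OF hom] hom_on_one[OF A.is_group S \<chi>]
      by simp
  qed
  have \<theta>_S: "\<theta> s = \<chi> s" if "s \<in> S" for s
  proof -
    have "\<theta> s = \<theta> (\<one> \<otimes> s)"
      using that subgroup.mem_carrier[OF S] by simp
    then show ?thesis
      using \<theta>_eq that subgroup.one_closed[OF V] hom_on_closed[OF \<chi>] hom_on_one[OF A.is_group V hom]
      by simp
  qed
  have V_sub: "V \<subseteq> V <#> S"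
    using subgroup.one_closed[OF S] subgroup.mem_carrier[OF V] unfolding set_mult_def by force
  have "S \<subseteq> V <#> S"
    using subgroup.one_closed[OF V] subgroup.mem_carrier[OF S] unfolding set_mult_def by force
  moreover have "abelian_hom_on G A (V <#> S) \<theta>"
    unfolding abelian_hom_on_def
    using V_sub \<theta> \<theta>_V mult_norm_subgroup[OF abelian_hom_on_normal[OF A.is_group \<psi>] S]
      abelian_hom_on_commutator[OF \<psi>] by auto
  ultimately show ?thesis
    using V_sub \<theta>_V \<theta>_S by blast
qed

lemma (in group) hom_on_generate_singleton:
  assumes A: "group A" and x: "x \<in> carrier G" and t: "t \<in> carrier A"
    and compat: "\<And>i::int. x [^] i = \<one> \<Longrightarrow> t [^]\<^bsub>A\<^esub> i = \<one>\<^bsub>A\<^esub>"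
  shows "\<exists>\<chi>. hom_on G A (generate G {x}) \<chi> \<and> (\<forall>i::int. \<chi> (x [^] i) = t [^]\<^bsub>A\<^esub> i)"
proof -
  interpret A: group A by (rule A)
  have same_pow: "t [^]\<^bsub>A\<^esub> i = t [^]\<^bsub>A\<^esub> j" if "x [^] i = x [^] j" for i j :: int
  proof -
    have "x [^] (i - j) = \<one>"
      using that x by (simp add: int_pow_diff)
    then have "t [^]\<^bsub>A\<^esub> ((i - j) + j) = t [^]\<^bsub>A\<^esub> j"
      using compat t by (simp only: A.int_pow_mult) simp
    then show ?thesis by simp
  qed
  define \<chi> where "\<chi> z = t [^]\<^bsub>A\<^esub> (SOME i::int. z = x [^] i)" for z
  have \<chi>: "\<chi> (x [^] i) = t [^]\<^bsub>A\<^esub> i" for i :: int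
    unfolding \<chi>_def by (rule same_pow[symmetric], rule someI[of _ i]) simp
  have "hom_on G A (generate G {x}) \<chi>"
    unfolding hom_on_def generate_pow[OF x]
  proof (intro conjI ballI Pi_I)
    fix z assume "z \<in> {x [^] i |i::int. i \<in> UNIV}"
    then obtain i :: int where "z = x [^] i"
      by blast
    then show "\<chi> z \<in> carrier A"
      using \<chi> t by simp
  next
    fix y z assume "y \<in> {x [^] i |i::int. i \<in> UNIV}" "z \<in> {x [^] i |i::int. i \<in> UNIV}"
    then obtain i j :: int where yz: "y = x [^] i" "z = x [^] j"
      by blast
    then have "\<chi> (y \<otimes> z) = \<chi> (x [^] (i + j))"
      using int_pow_mult[OF x] by simp
    also have "\<dots> = \<chi> y \<otimes>\<^bsub>A\<^esub> \<chi> z"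
      using \<chi> A.int_pow_mult[OF t] yz by simp
    finally show "\<chi> (y \<otimes> z) = \<chi> y \<otimes>\<^bsub>A\<^esub> \<chi> z" .
  qed
  then show ?thesis
    using \<chi> by blast
qed

lemma (in group) abelian_hom_on_extend_generate:
  assumes A: "comm_group A" and \<psi>: "abelian_hom_on G A V \<psi>"
    and x: "x \<in> carrier G" and t: "t \<in> carrier A"
    and compat: "\<And>i::int. x [^] i \<in> V \<Longrightarrow> \<psi> (x [^] i) = t [^]\<^bsub>A\<^esub> i"
  shows "\<exists>V' \<theta>. abelian_hom_on G A V' \<theta> \<and> V \<subseteq> V' \<and> x \<in> V' \<and> (\<forall>v\<in>V. \<theta> v = \<psi> v) \<and> \<theta> x = t"
proof -
  interpret A: comm_group A by (rule A)
  have V: "subgroup V G" and hom: "hom_on G A V \<psi>"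
    using \<psi> by (auto simp: abelian_hom_on_def)
  have "t [^]\<^bsub>A\<^esub> i = \<one>\<^bsub>A\<^esub>" if "x [^] i = \<one>" for i :: int
    using compat[of i] that subgroup.one_closed[OF V] hom_on_one[OF A.is_group V hom] by simp
  then obtain \<chi> where \<chi>: "hom_on G A (generate G {x}) \<chi>" and \<chi>_pow: "\<forall>i::int. \<chi> (x [^] i) = t [^]\<^bsub>A\<^esub> i"
    using hom_on_generate_singleton[OF A.is_group x t] by blast
  have "\<forall>z\<in>V \<inter> generate G {x}. \<psi> z = \<chi> z"
    using compat \<chi>_pow unfolding generate_pow[OF x] by auto
  then obtain V' \<theta> where "abelian_hom_on G A V' \<theta>" "V \<subseteq> V'" "generate G {x} \<subseteq> V'"
    "\<forall>v\<in>V. \<theta> v = \<psi> v" "\<forall>s\<in>generate G {x}. \<theta> s = \<chi> s"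
    using abelian_hom_on_set_mult[OF A \<psi> generate_is_subgroup \<chi>] x by auto
  moreover have "x \<in> generate G {x}"
    by (simp add: generate.incl)
  moreover have "\<chi> x = t"
    using \<chi>_pow[rule_format, of 1] x t by simp
  ultimately show ?thesis
    by blast
qed

lemma (in group) exists_compatible_root:
  assumes fin: "finite (carrier G)" and A: "comm_group A" and hyp: "satisfies_hypothesis A \<pi>"
    and V: "subgroup V G" and \<psi>: "hom_on G A V \<psi>" and x: "x \<in> carrier G"
  shows "\<exists>t\<in>carrier A. \<forall>i::int. x [^] i \<in> V \<longrightarrow> \<psi> (x [^] i) = t [^]\<^bsub>A\<^esub> i"
proof -
  interpret A: comm_group A by (rule A)
  have order: "order G > 0"
    using fin order_gt_0_iff_finite by blast
  have ex: "\<exists>n::nat. 0 < n \<and> x [^] n \<in> V"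
    using pow_order_eq_1[OF x] subgroup.one_closed[OF V] order by (intro exI[of _ "order G"]) auto
  define k where "k = (LEAST n::nat. 0 < n \<and> x [^] n \<in> V)"
  have k: "0 < k" "x [^] k \<in> V"
    using LeastI_ex[OF ex] unfolding k_def by auto
  have least: "x [^] n \<notin> V" if "0 < n" "n < k" for n :: nat
    using not_less_Least[of n "\<lambda>n. 0 < n \<and> x [^] n \<in> V"] that unfolding k_def by blast
  define a where "a = \<psi> (x [^] k)"
  have a: "a \<in> carrier A"
    using hom_on_closed[OF \<psi> k(2)] by (simp add: a_def)
  have "a [^]\<^bsub>A\<^esub> order G = \<psi> ((x [^] k) [^] order G)"
    using hom_on_int_pow[OF A.is_group V \<psi> k(2), of "int (order G)"] by (simp add: a_def int_pow_int)
  also have "\<dots> = \<one>\<^bsub>A\<^esub>"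
    using pow_order_eq_1 x hom_on_one[OF A.is_group V \<psi>] by simp
  finally obtain t where t: "t \<in> carrier A" "t [^]\<^bsub>A\<^esub> k = a"
    using A.exists_nat_pow_root[OF hyp a _ order k(1)] by blast
  have "\<psi> (x [^] i) = t [^]\<^bsub>A\<^esub> i" if i: "x [^] i \<in> V" for i :: int
  proof -
    obtain q where q: "i = int k * q"
      using int_pow_mem_imp_dvd_least[OF V x k least i] by (auto elim: dvdE)
    then have "x [^] i = (x [^] k) [^] q"
      using x by (simp add: int_pow_pow int_pow_int[symmetric])
    then have "\<psi> (x [^] i) = a [^]\<^bsub>A\<^esub> q"
      using hom_on_int_pow[OF A.is_group V \<psi> k(2)] by (simp add: a_def)
    also have "\<dots> = t [^]\<^bsub>A\<^esub> i"
      using t A.int_pow_pow[OF t(1), of "int k" q] by (simp add: q int_pow_int)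
    finally show ?thesis .
  qed
  then show ?thesis
    using t by blast
qed

theorem (in group) abelian_hom_on_extends:
  assumes fin: "finite (carrier G)" and A: "comm_group A" and hyp: "satisfies_hypothesis A \<pi>"
    and \<psi>: "abelian_hom_on G A V \<psi>"
  shows "\<exists>\<theta>\<in>hom G A. \<forall>v\<in>V. \<theta> v = \<psi> v"
  using \<psi>
proof (induction "card (carrier G) - card V" arbitrary: V \<psi> rule: less_induct)
  case less
  have V: "subgroup V G" and hom: "hom_on G A V \<psi>"
    using less.prems by (auto simp: abelian_hom_on_def)
  show ?case
  proof (cases "V = carrier G")
    case True
    then show ?thesis
      using hom hom_on_carrier_iff by blast
  next
    case False
    then obtain x where x: "x \<in> carrier G" "x \<notin> V"
      using subgroup.subset[OF V] by blast
    obtain t where "t \<in> carrier A" "\<forall>i::int. x [^] i \<in> V \<longrightarrow> \<psi> (x [^] i) = t [^]\<^bsub>A\<^esub> i"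
      using exists_compatible_root[OF fin A hyp V hom x(1)] by blast
    then obtain V' \<theta> where \<theta>: "abelian_hom_on G A V' \<theta>" and V': "V \<subseteq> V'" "x \<in> V'"
      and \<theta>_V: "\<forall>v\<in>V. \<theta> v = \<psi> v"
      using abelian_hom_on_extend_generate[OF A less.prems x(1)] by blast
    have V'_carrier: "V' \<subseteq> carrier G"
      using \<theta> subgroup.subset by (auto simp: abelian_hom_on_def)
    then have "card V < card V'"
      using V' x(2) fin by (intro psubset_card_mono) (auto intro: finite_subset)
    moreover have "card V' \<le> card (carrier G)"
      using V'_carrier fin by (rule card_mono[rotated])
    ultimately obtain \<Theta> where "\<Theta> \<in> hom G A" "\<forall>v\<in>V'. \<Theta> v = \<theta> v"
      using less.hyps[OF _ \<theta>] by force
    with V' \<theta>_V show ?thesis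
      by (intro bexI[of _ \<Theta>]) auto
  qed
qed

section \<open>The extensibility criterion in a finite group\<close>

lemma (in group) exists_hom_subgroup_generated_value:
  fixes p :: nat
  assumes fin: "finite (carrier G)" and A: "comm_group A" and hyp: "satisfies_hypothesis A \<pi>"
    and U: "subgroup U G" and x: "x \<in> U" "x \<notin> derived G U" and p: "Factorial_Ring.prime p"
    and xp: "x [^] p \<in> derived G U" and z: "z \<in> carrier A" "z [^]\<^bsub>A\<^esub> p = \<one>\<^bsub>A\<^esub>"
  shows "\<exists>\<phi>\<in>hom (subgroup_generated G U) A. \<phi> x = z"
proof -
  interpret A: comm_group A by (rule A)
  let ?K = "subgroup_generated G U" and ?D = "derived G U"
  interpret K: group ?K by simp
  have carrier_K: "carrier ?K = U"
    by (rule subgroup.carrier_subgroup_generated_subgroup[OF U])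
  have D: "subgroup ?D G"
    by (rule derived_is_subgroup[OF subgroup.subset[OF U]])
  have DU: "?D \<subseteq> U"
    by (rule derived_incl[OF subset_refl U])
  have "derived_set ?K (carrier ?K) \<subseteq> ?D"
    using derived_set_subset_derived[of ?K U] derived_subgroup_generated[OF U] carrier_K by simp
  then have trivial: "abelian_hom_on ?K A ?D (\<lambda>_. \<one>\<^bsub>A\<^esub>)"
    using K.abelian_hom_on_one[OF A.is_group subgroup_of_subgroup_generated[OF DU D]] by simp
  have "z [^]\<^bsub>A\<^esub> i = \<one>\<^bsub>A\<^esub>" if "x [^]\<^bsub>?K\<^esub> i \<in> ?D" for i :: int
  proof -
    have "x [^] i \<in> ?D"
      using that x carrier_K by (simp add: int_pow_subgroup_generated)
    then obtain q where "i = int p * q"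
      using int_pow_mem_imp_prime_dvd[OF D _ x(2) p xp] x subgroup.subset[OF U] by (auto elim: dvdE)
    then show ?thesis
      using z A.int_pow_pow[OF z(1), of "int p" q] by (simp add: int_pow_int)
  qed
  then obtain V' \<theta> where \<theta>: "abelian_hom_on ?K A V' \<theta>" "x \<in> V'" "\<theta> x = z"
    using K.abelian_hom_on_extend_generate[OF A trivial _ z(1)] x carrier_K by force
  moreover have "finite (carrier ?K)"
    using carrier_K fin finite_subset[OF subgroup.subset[OF U]] by simp
  ultimately show ?thesis
    using K.abelian_hom_on_extends[OF _ A hyp \<theta>(1)] by force
qed

lemma (in group) homs_extend_imp_multiplicity_eq:
  assumes fin: "finite (carrier G)" and U: "subgroup U G" and A: "comm_group A"
    and hyp: "satisfies_hypothesis A \<pi>"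
    and ext: "\<forall>\<phi>\<in>hom (subgroup_generated G U) A. \<exists>\<psi>\<in>hom G A. \<forall>u\<in>U. \<psi> u = \<phi> u"
    and p: "p \<in> \<pi>"
  shows "multiplicity p (card (U \<inter> derived G (carrier G))) = multiplicity p (card (derived G U))"
proof (rule ccontr)
  interpret A: comm_group A by (rule A)
  let ?E = "U \<inter> derived G (carrier G)" and ?D = "derived G U"
  have prime: "Factorial_Ring.prime p"
    using hyp p by (rule satisfies_hypothesis_primes)
  have D: "subgroup ?D G"
    by (rule derived_is_subgroup[OF subgroup.subset[OF U]])
  have E: "subgroup ?E G"
    by (rule subgroup_inter_derived[OF U])
  have DE: "?D \<subseteq> ?E"
    by (rule derived_subset_inter_derived[OF U])
  assume "multiplicity p (card ?E) \<noteq> multiplicity p (card ?D)"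
  moreover have "multiplicity p (card ?D) \<le> multiplicity p (card ?E)"
    by (rule dvd_imp_multiplicity_le) (use card_subgroup_dvd[OF D E DE] card_subgroup_pos[OF fin E] in auto)
  ultimately obtain x where x: "x \<in> ?E" "x \<notin> ?D" "x [^] p \<in> ?D"
    using exists_pow_prime_mem[OF fin D E prime] by force
  obtain z where z: "z \<in> carrier A" "z [^]\<^bsub>A\<^esub> p = \<one>\<^bsub>A\<^esub>" "z \<noteq> \<one>\<^bsub>A\<^esub>"
    using A.exists_elem_order_prime[OF hyp p] by blast
  obtain \<phi> where "\<phi> \<in> hom (subgroup_generated G U) A" "\<phi> x = z"
    using exists_hom_subgroup_generated_value[OF fin A hyp U _ x(2) prime x(3) z(1,2)] x(1) by blast
  then obtain \<psi> where \<psi>: "\<psi> \<in> hom G A" "\<psi> x = z"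
    using ext x(1) by fastforce
  have "\<psi> x = \<one>\<^bsub>A\<^esub>"
    using hom_on_derived_eq_one[OF A subgroup_self] \<psi>(1) x(1) by (simp add: hom_on_carrier_iff)
  then show False
    using \<psi>(2) z(3) by simp
qed

lemma (in group) hom_on_inter_derived_eq_one:
  assumes fin: "finite (carrier G)" and A: "comm_group A" and hyp: "satisfies_hypothesis A \<pi>"
    and U: "subgroup U G" and \<phi>: "hom_on G A U \<phi>"
    and eq: "\<forall>p\<in>\<pi>. multiplicity p (card (U \<inter> derived G (carrier G))) = multiplicity p (card (derived G U))"
    and z: "z \<in> U \<inter> derived G (carrier G)"
  shows "\<phi> z = \<one>\<^bsub>A\<^esub>"
proof -
  interpret A: comm_group A by (rule A)
  let ?E = "U \<inter> derived G (carrier G)" and ?D = "derived G U"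
  let ?K = "{x \<in> ?E. \<phi> x = \<one>\<^bsub>A\<^esub>}"
  define n where "n = card (\<phi> ` ?E)"
  have D: "subgroup ?D G"
    by (rule derived_is_subgroup[OF subgroup.subset[OF U]])
  have E: "subgroup ?E G"
    by (rule subgroup_inter_derived[OF U])
  have \<phi>_E: "hom_on G A ?E \<phi>"
    using \<phi> by (rule hom_on_subset) blast
  have K: "subgroup ?K G"
    by (rule subgroup_hom_on_kernel[OF A.is_group E \<phi>_E])
  have DK: "?D \<subseteq> ?K"
    using derived_subset_inter_derived[OF U] hom_on_derived_eq_one[OF A U \<phi>] by blast
  have finite_E: "finite ?E"
    using fin finite_subset[OF subgroup.subset[OF E]] by blast
  have card_E: "card ?E = n * card ?K"
    unfolding n_def by (rule card_subgroup_eq_card_image_mult_card_kernel[OF A.is_group E \<phi>_E finite_E])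
  then have n: "n > 0"
    using card_subgroup_pos[OF fin E] by simp
  have "\<not> p dvd n" if p: "p \<in> \<pi>" for p
    using multiplicity_eq_imp_not_dvd[OF satisfies_hypothesis_primes[OF hyp p]
        card_subgroup_dvd[OF D K DK] card_subgroup_pos[OF fin K] n] card_E eq p by simp
  moreover have "\<phi> z [^]\<^bsub>A\<^esub> n = \<one>\<^bsub>A\<^esub>"
    unfolding n_def using A.pow_card_subgroup_eq_one[OF subgroup_hom_on_image[OF A.is_group E \<phi>_E]] z
    by blast
  ultimately show ?thesis
    using A.torsion_eq_one[OF hyp n] hom_on_closed[OF \<phi>] z by blast
qed

lemma (in group) multiplicity_eq_imp_homs_extend:
  assumes fin: "finite (carrier G)" and U: "subgroup U G" and A: "comm_group A"
    and hyp: "satisfies_hypothesis A \<pi>"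
    and eq: "\<forall>p\<in>\<pi>. multiplicity p (card (U \<inter> derived G (carrier G))) = multiplicity p (card (derived G U))"
    and \<phi>: "\<phi> \<in> hom (subgroup_generated G U) A"
  shows "\<exists>\<psi>\<in>hom G A. \<forall>u\<in>U. \<psi> u = \<phi> u"
proof -
  interpret A: comm_group A by (rule A)
  have \<phi>_U: "hom_on G A U \<phi>"
    using \<phi> hom_on_iff_hom_subgroup_generated[OF U] by blast
  have "abelian_hom_on G A (derived G (carrier G)) (\<lambda>_. \<one>\<^bsub>A\<^esub>)"
    by (rule abelian_hom_on_one[OF A.is_group derived_is_subgroup derived_set_subset_derived]) simp
  moreover have "\<forall>z\<in>derived G (carrier G) \<inter> U. \<one>\<^bsub>A\<^esub> = \<phi> z"
    using hom_on_inter_derived_eq_one[OF fin A hyp U \<phi>_U eq] by auto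
  ultimately obtain V' \<theta> where \<theta>: "abelian_hom_on G A V' \<theta>" "U \<subseteq> V'" "\<forall>u\<in>U. \<theta> u = \<phi> u"
    using abelian_hom_on_set_mult[OF A _ U \<phi>_U] by blast
  then obtain \<psi> where "\<psi> \<in> hom G A" "\<forall>v\<in>V'. \<psi> v = \<theta> v"
    using abelian_hom_on_extends[OF fin A hyp \<theta>(1)] by blast
  with \<theta> show ?thesis
    by (intro bexI[of _ \<psi>]) auto
qed

theorem (in group) homs_extend_iff_multiplicity_eq:
  assumes "finite (carrier G)" and "subgroup U G" and "comm_group A" and "satisfies_hypothesis A \<pi>"
  shows "(\<forall>\<phi>\<in>hom (subgroup_generated G U) A. \<exists>\<psi>\<in>hom G A. \<forall>u\<in>U. \<psi> u = \<phi> u) \<longleftrightarrow>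
    (\<forall>p\<in>\<pi>. multiplicity p (card (U \<inter> derived G (carrier G))) = multiplicity p (card (derived G U)))"
  using homs_extend_imp_multiplicity_eq[OF assms] multiplicity_eq_imp_homs_extend[OF assms] by blast

section \<open>Subdirect products\<close>

lemma (in group_hom) subgroup_vimage:
  assumes S: "subgroup S H"
  shows "subgroup {x \<in> carrier G. h x \<in> S} G"
proof (rule G.subgroupI)
  show "{x \<in> carrier G. h x \<in> S} \<noteq> {}"
    using subgroup.one_closed[OF S] by force
next
  fix a assume "a \<in> {x \<in> carrier G. h x \<in> S}"
  then show "inv a \<in> {x \<in> carrier G. h x \<in> S}"
    using subgroup.m_inv_closed[OF S] by simp
next
  fix a b assume "a \<in> {x \<in> carrier G. h x \<in> S}" "b \<in> {x \<in> carrier G. h x \<in> S}"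
  then show "a \<otimes> b \<in> {x \<in> carrier G. h x \<in> S}"
    using subgroup.m_closed[OF S] by simp
qed auto

lemma (in group_hom) card_subgroup_between_derived:
  assumes fin: "finite (carrier G)" and U: "subgroup U G" and surj: "h ` U = carrier H"
    and S: "subgroup S G" and DS: "derived G U \<subseteq> S" and SW: "S \<subseteq> derived G (carrier G)"
  shows "card S = card (derived H (carrier H)) * card {x \<in> S. h x = \<one>\<^bsub>H\<^esub>}"
proof -
  have "h ` S \<subseteq> derived H (h ` carrier G)"
    using SW derived_img[OF subset_refl] by blast
  also have "\<dots> \<subseteq> derived H (carrier H)"
    by (rule H.mono_derived) auto
  finally have "h ` S \<subseteq> derived H (carrier H)" .
  moreover have "derived H (carrier H) \<subseteq> h ` S"
    using derived_img[OF subgroup.subset[OF U]] surj DS by auto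
  ultimately have "h ` S = derived H (carrier H)" by blast
  moreover have "hom_on G H S h"
    using hom_on_subset[of G H "carrier G" h S] hom_on_carrier_iff homh subgroup.subset[OF S] by blast
  ultimately show ?thesis
    using G.card_subgroup_eq_card_image_mult_card_kernel[OF H.is_group S]
      finite_subset[OF subgroup.subset[OF S] fin] by simp
qed

lemma inl_group_hom: "group G \<Longrightarrow> group H \<Longrightarrow> group_hom G (G \<times>\<times> H) (\<lambda>g. (g, \<one>\<^bsub>H\<^esub>))"
  by (auto simp: group_hom_def group_hom_axioms_def hom_def DirProd_group group.is_monoid)

lemma inr_group_hom: "group G \<Longrightarrow> group H \<Longrightarrow> group_hom H (G \<times>\<times> H) (\<lambda>h. (\<one>\<^bsub>G\<^esub>, h))"
  by (auto simp: group_hom_def group_hom_axioms_def hom_def DirProd_group group.is_monoid)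

lemma fst_group_hom: "group G \<Longrightarrow> group H \<Longrightarrow> group_hom (G \<times>\<times> H) G fst"
  by (auto simp: group_hom_def group_hom_axioms_def hom_def DirProd_group mult_DirProd')

lemma snd_group_hom: "group G \<Longrightarrow> group H \<Longrightarrow> group_hom (G \<times>\<times> H) H snd"
  by (auto simp: group_hom_def group_hom_axioms_def hom_def DirProd_group mult_DirProd')

lemma subgroup_k1:
  assumes "group G" and "group H" and "subgroup S (G \<times>\<times> H)"
  shows "subgroup (k1 G H S) G"
  using group_hom.subgroup_vimage[OF inl_group_hom[OF assms(1,2)] assms(3)] by (simp add: k1_def)

lemma subgroup_k2:
  assumes "group G" and "group H" and "subgroup S (G \<times>\<times> H)"
  shows "subgroup (k2 G H S) H"
  using group_hom.subgroup_vimage[OF inr_group_hom[OF assms(1,2)] assms(3)] by (simp add: k2_def)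

lemma fst_derived_DirProd:
  assumes G: "group G" and H: "group H"
  shows "fst ` derived (G \<times>\<times> H) (carrier (G \<times>\<times> H)) = derived G (carrier G)"
proof -
  have "fst ` carrier (G \<times>\<times> H) = carrier G"
    using group.is_monoid[OF H] by (auto intro: image_eqI[where x = "(_, \<one>\<^bsub>H\<^esub>)"])
  then show ?thesis
    using group_hom.derived_img[OF fst_group_hom[OF G H], of "carrier (G \<times>\<times> H)"] by simp
qed

lemma snd_derived_DirProd:
  assumes G: "group G" and H: "group H"
  shows "snd ` derived (G \<times>\<times> H) (carrier (G \<times>\<times> H)) = derived H (carrier H)"
proof -
  have "snd ` carrier (G \<times>\<times> H) = carrier H"
    using group.is_monoid[OF G] by (auto intro: image_eqI[where x = "(\<one>\<^bsub>G\<^esub>, _)"])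
  then show ?thesis
    using group_hom.derived_img[OF snd_group_hom[OF G H], of "carrier (G \<times>\<times> H)"] by simp
qed

lemma inl_mem_derived_iff:
  assumes G: "group G" and H: "group H" and g: "g \<in> carrier G"
  shows "(g, \<one>\<^bsub>H\<^esub>) \<in> derived (G \<times>\<times> H) (carrier (G \<times>\<times> H)) \<longleftrightarrow> g \<in> derived G (carrier G)"
proof
  assume "(g, \<one>\<^bsub>H\<^esub>) \<in> derived (G \<times>\<times> H) (carrier (G \<times>\<times> H))"
  then show "g \<in> derived G (carrier G)"
    using fst_derived_DirProd[OF G H] by (metis fst_conv image_eqI)
next
  assume "g \<in> derived G (carrier G)"
  then have "(g, \<one>\<^bsub>H\<^esub>) \<in> derived (G \<times>\<times> H) ((\<lambda>g. (g, \<one>\<^bsub>H\<^esub>)) ` carrier G)"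
    using group_hom.derived_img[OF inl_group_hom[OF G H], of "carrier G"] by simp
  also have "\<dots> \<subseteq> derived (G \<times>\<times> H) (carrier (G \<times>\<times> H))"
    by (rule group.mono_derived[OF DirProd_group[OF G H]]) (use group.is_monoid[OF H] in auto)
  finally show "(g, \<one>\<^bsub>H\<^esub>) \<in> derived (G \<times>\<times> H) (carrier (G \<times>\<times> H))" .
qed

lemma inr_mem_derived_iff:
  assumes G: "group G" and H: "group H" and h: "h \<in> carrier H"
  shows "(\<one>\<^bsub>G\<^esub>, h) \<in> derived (G \<times>\<times> H) (carrier (G \<times>\<times> H)) \<longleftrightarrow> h \<in> derived H (carrier H)"
proof
  assume "(\<one>\<^bsub>G\<^esub>, h) \<in> derived (G \<times>\<times> H) (carrier (G \<times>\<times> H))"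
  then show "h \<in> derived H (carrier H)"
    using snd_derived_DirProd[OF G H] by (metis snd_conv image_eqI)
next
  assume "h \<in> derived H (carrier H)"
  then have "(\<one>\<^bsub>G\<^esub>, h) \<in> derived (G \<times>\<times> H) ((\<lambda>h. (\<one>\<^bsub>G\<^esub>, h)) ` carrier H)"
    using group_hom.derived_img[OF inr_group_hom[OF G H], of "carrier H"] by simp
  also have "\<dots> \<subseteq> derived (G \<times>\<times> H) (carrier (G \<times>\<times> H))"
    by (rule group.mono_derived[OF DirProd_group[OF G H]]) (use group.is_monoid[OF G] in auto)
  finally show "(\<one>\<^bsub>G\<^esub>, h) \<in> derived (G \<times>\<times> H) (carrier (G \<times>\<times> H))" .
qed

lemma k1_inter_derived:
  "group G \<Longrightarrow> group H \<Longrightarrow>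
    k1 G H (U \<inter> derived (G \<times>\<times> H) (carrier (G \<times>\<times> H))) = derived G (carrier G) \<inter> k1 G H U"
  by (auto simp: k1_def inl_mem_derived_iff simp del: carrier_DirProd)

lemma k2_inter_derived:
  "group G \<Longrightarrow> group H \<Longrightarrow>
    k2 G H (U \<inter> derived (G \<times>\<times> H) (carrier (G \<times>\<times> H))) = derived H (carrier H) \<inter> k2 G H U"
  by (auto simp: k2_def inr_mem_derived_iff simp del: carrier_DirProd)

lemma card_k1:
  assumes "S \<subseteq> carrier G \<times> carrier H"
  shows "card (k1 G H S) = card {x \<in> S. snd x = \<one>\<^bsub>H\<^esub>}"
proof -
  have "{x \<in> S. snd x = \<one>\<^bsub>H\<^esub>} = (\<lambda>g. (g, \<one>\<^bsub>H\<^esub>)) ` k1 G H S"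
    using assms by (force simp: k1_def)
  then show ?thesis
    by (simp add: card_image inj_on_def)
qed

lemma card_k2:
  assumes "S \<subseteq> carrier G \<times> carrier H"
  shows "card (k2 G H S) = card {x \<in> S. fst x = \<one>\<^bsub>G\<^esub>}"
proof -
  have "{x \<in> S. fst x = \<one>\<^bsub>G\<^esub>} = (\<lambda>h. (\<one>\<^bsub>G\<^esub>, h)) ` k2 G H S"
    using assms by (force simp: k2_def)
  then show ?thesis
    by (simp add: card_image inj_on_def)
qed

lemma card_subdirect_k1:
  assumes G: "group G" and H: "group H" and fin: "finite (carrier G)" "finite (carrier H)"
    and U: "subdirect G H U" and S: "subgroup S (G \<times>\<times> H)"
    and DS: "derived (G \<times>\<times> H) U \<subseteq> S" and SW: "S \<subseteq> derived (G \<times>\<times> H) (carrier (G \<times>\<times> H))"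
  shows "card S = card (derived H (carrier H)) * card (k1 G H S)"
proof -
  have "card S = card (derived H (carrier H)) * card {x \<in> S. snd x = \<one>\<^bsub>H\<^esub>}"
  proof (rule group_hom.card_subgroup_between_derived[OF snd_group_hom[OF G H] _ _ _ S DS SW])
    show "finite (carrier (G \<times>\<times> H))"
      using fin by simp
  qed (use U in \<open>simp_all add: subdirect_def\<close>)
  then show ?thesis
    using card_k1[of S G H] subgroup.subset[OF S] by simp
qed

lemma card_subdirect_k2:
  assumes G: "group G" and H: "group H" and fin: "finite (carrier G)" "finite (carrier H)"
    and U: "subdirect G H U" and S: "subgroup S (G \<times>\<times> H)"
    and DS: "derived (G \<times>\<times> H) U \<subseteq> S" and SW: "S \<subseteq> derived (G \<times>\<times> H) (carrier (G \<times>\<times> H))"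
  shows "card S = card (derived G (carrier G)) * card (k2 G H S)"
proof -
  have "card S = card (derived G (carrier G)) * card {x \<in> S. fst x = \<one>\<^bsub>G\<^esub>}"
  proof (rule group_hom.card_subgroup_between_derived[OF fst_group_hom[OF G H] _ _ _ S DS SW])
    show "finite (carrier (G \<times>\<times> H))"
      using fin by simp
  qed (use U in \<open>simp_all add: subdirect_def\<close>)
  then show ?thesis
    using card_k2[of S G H] subgroup.subset[OF S] by simp
qed

lemma multiplicity_eq_iff_sylow_k1:
  assumes G: "group G" and H: "group H" and fin: "finite (carrier G)" "finite (carrier H)"
    and U: "subdirect G H U" and p: "Factorial_Ring.prime p"
  shows "multiplicity p (card (U \<inter> derived (G \<times>\<times> H) (carrier (G \<times>\<times> H))))
      = multiplicity p (card (derived (G \<times>\<times> H) U)) \<longleftrightarrow>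
    (\<exists>P. sylow_subgroup_of G p P (derived G (carrier G) \<inter> k1 G H U) \<and> P \<subseteq> k1 G H (derived (G \<times>\<times> H) U))"
proof -
  interpret G: group G by (rule G)
  interpret H: group H by (rule H)
  interpret W: group "G \<times>\<times> H" by (rule DirProd_group[OF G H])
  let ?E = "U \<inter> derived (G \<times>\<times> H) (carrier (G \<times>\<times> H))" and ?D = "derived (G \<times>\<times> H) U"
  have U_sub: "subgroup U (G \<times>\<times> H)"
    using U by (simp add: subdirect_def)
  have E: "subgroup ?E (G \<times>\<times> H)"
    by (rule W.subgroup_inter_derived[OF U_sub])
  have D: "subgroup ?D (G \<times>\<times> H)"
    by (rule W.derived_is_subgroup[OF subgroup.subset[OF U_sub]])
  have DE: "?D \<subseteq> ?E"
    by (rule W.derived_subset_inter_derived[OF U_sub])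
  have M: "subgroup (k1 G H ?E) G" and L: "subgroup (k1 G H ?D) G"
    using subgroup_k1[OF G H E] subgroup_k1[OF G H D] .
  have LM: "k1 G H ?D \<subseteq> k1 G H ?E"
    using DE by (auto simp: k1_def)
  have "card (derived H (carrier H)) > 0"
    using H.card_subgroup_pos[OF fin(2) H.derived_is_subgroup] by simp
  moreover have "card ?E = card (derived H (carrier H)) * card (k1 G H ?E)"
    using card_subdirect_k1[OF G H fin U E DE] by blast
  moreover have "card ?D = card (derived H (carrier H)) * card (k1 G H ?D)"
    using card_subdirect_k1[OF G H fin U D subset_refl] DE by blast
  ultimately show ?thesis
    unfolding k1_inter_derived[OF G H, symmetric]
    by (rule G.multiplicity_eq_iff_sylow_subgroup_within[OF fin(1) L M LM p])
qed

lemma multiplicity_eq_iff_sylow_k2: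
  assumes G: "group G" and H: "group H" and fin: "finite (carrier G)" "finite (carrier H)"
    and U: "subdirect G H U" and p: "Factorial_Ring.prime p"
  shows "multiplicity p (card (U \<inter> derived (G \<times>\<times> H) (carrier (G \<times>\<times> H))))
      = multiplicity p (card (derived (G \<times>\<times> H) U)) \<longleftrightarrow>
    (\<exists>P. sylow_subgroup_of H p P (derived H (carrier H) \<inter> k2 G H U) \<and> P \<subseteq> k2 G H (derived (G \<times>\<times> H) U))"
proof -
  interpret G: group G by (rule G)
  interpret H: group H by (rule H)
  interpret W: group "G \<times>\<times> H" by (rule DirProd_group[OF G H])
  let ?E = "U \<inter> derived (G \<times>\<times> H) (carrier (G \<times>\<times> H))" and ?D = "derived (G \<times>\<times> H) U"
  have U_sub: "subgroup U (G \<times>\<times> H)"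
    using U by (simp add: subdirect_def)
  have E: "subgroup ?E (G \<times>\<times> H)"
    by (rule W.subgroup_inter_derived[OF U_sub])
  have D: "subgroup ?D (G \<times>\<times> H)"
    by (rule W.derived_is_subgroup[OF subgroup.subset[OF U_sub]])
  have DE: "?D \<subseteq> ?E"
    by (rule W.derived_subset_inter_derived[OF U_sub])
  have M: "subgroup (k2 G H ?E) H" and L: "subgroup (k2 G H ?D) H"
    using subgroup_k2[OF G H E] subgroup_k2[OF G H D] .
  have LM: "k2 G H ?D \<subseteq> k2 G H ?E"
    using DE by (auto simp: k2_def)
  have "card (derived G (carrier G)) > 0"
    using G.card_subgroup_pos[OF fin(1) G.derived_is_subgroup] by simp
  moreover have "card ?E = card (derived G (carrier G)) * card (k2 G H ?E)"
    using card_subdirect_k2[OF G H fin U E DE] by blast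
  moreover have "card ?D = card (derived G (carrier G)) * card (k2 G H ?D)"
    using card_subdirect_k2[OF G H fin U D subset_refl] DE by blast
  ultimately show ?thesis
    unfolding k2_inter_derived[OF G H, symmetric]
    by (rule H.multiplicity_eq_iff_sylow_subgroup_within[OF fin(2) L M LM p])
qed

theorem corollary3p3:
  fixes G :: "('a, 'c) monoid_scheme" and H :: "('b, 'd) monoid_scheme"
    and A :: "('e, 'f) monoid_scheme" and U :: "('a \<times> 'b) set" and \<pi> :: "nat set"
  assumes "group G" and "group H"
    and "finite (carrier G)" and "finite (carrier H)"
    and "subdirect G H U"
    and "comm_group A"
    and "satisfies_hypothesis A \<pi>"
  shows "(extensible G H A U \<longleftrightarrow>
            (\<forall>p \<in> \<pi>. \<exists>P. sylow_subgroup_of G p P (derived G (carrier G) \<inter> k1 G H U)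
                        \<and> P \<subseteq> k1 G H (derived (G \<times>\<times> H) U)))
       \<and> (extensible G H A U \<longleftrightarrow>
            (\<forall>p \<in> \<pi>. \<exists>P. sylow_subgroup_of H p P (derived H (carrier H) \<inter> k2 G H U)
                        \<and> P \<subseteq> k2 G H (derived (G \<times>\<times> H) U)))"
proof -
  have "finite (carrier (G \<times>\<times> H))" and "subgroup U (G \<times>\<times> H)"
    using assms(3-5) by (simp_all add: subdirect_def)
  then have "extensible G H A U \<longleftrightarrow> (\<forall>p\<in>\<pi>.
      multiplicity p (card (U \<inter> derived (G \<times>\<times> H) (carrier (G \<times>\<times> H))))
        = multiplicity p (card (derived (G \<times>\<times> H) U)))"
    unfolding extensible_def
    using group.homs_extend_iff_multiplicity_eq[OF DirProd_group[OF assms(1,2)] _ _ assms(6,7)]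
    by blast
  moreover have "Factorial_Ring.prime p" if "p \<in> \<pi>" for p
    using assms(7) that by (rule satisfies_hypothesis_primes)
  ultimately show ?thesis
    using multiplicity_eq_iff_sylow_k1[OF assms(1-5)] multiplicity_eq_iff_sylow_k2[OF assms(1-5)]
    by simp
qed

end
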